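(* Let $m\ge n$, let $A$ be an $m\times n$ complex matrix of full rank $n$, and let $Z$ be an $m\times(m-n)$ matrix whose columns form a basis of $R(A)^\perp$. For $\mu>0$ let $C_\mu=\{z\in\mathbb{C}: |\mathrm{Im}\,z|\le\mu\,\mathrm{Re}\,z,\ z\neq0\}$, let $\mathcal{D}_\mu$ be the set of $m\times m$ diagonal matrices with all diagonal entries in $C_\mu$, and for a full column rank $m\times k$ matrix $B$ set $\chi(B,\mu)=\sup_{D\in\mathcal{D}_\mu}\|B(B^*DB)^{-1}B^*D\|$. Then $\chi(A,\mu)=\chi(Z,\mu)$ for every $\mu>0$.
   Context: Norms are operator norms induced by the Euclidean norm; $R(\cdot)$ denotes the range (column space). *)

theory Defs
  imports "HOL-Analysis.Analysis"
begin

definition ctrans :: "complex^'k^'m \<Rightarrow> complex^'m^'k" where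
  "ctrans B = (\<chi> i j. cnj (B $ j $ i))"

definition cinner :: "complex^'m \<Rightarrow> complex^'m \<Rightarrow> complex" where
  "cinner x y = (\<Sum>i\<in>UNIV. cnj (x $ i) * y $ i)"

definition col_range :: "complex^'k^'m \<Rightarrow> (complex^'m) set" where
  "col_range B = range (\<lambda>x. B *v x)"

definition corth :: "(complex^'m) set \<Rightarrow> (complex^'m) set" where
  "corth S = {x. \<forall>y\<in>S. cinner y x = 0}"

definition diag_mat :: "complex^'m \<Rightarrow> complex^'m^'m" where
  "diag_mat d = (\<chi> i j. if i = j then d $ i else 0)"

definition sector :: "real \<Rightarrow> complex set" where
  "sector \<mu> = {z. \<bar>Im z\<bar> \<le> \<mu> * Re z \<and> z \<noteq> 0}"

definition Dset :: "real \<Rightarrow> (complex^'m^'m) set" where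
  "Dset \<mu> = {diag_mat d | d. \<forall>i. d $ i \<in> sector \<mu>}"

definition opnorm :: "complex^'a^'b \<Rightarrow> real" where
  "opnorm M = onorm (\<lambda>x. M *v x)"

definition chi :: "complex^'k^'m \<Rightarrow> real \<Rightarrow> ereal" where
  "chi B \<mu> = (SUP D\<in>Dset \<mu>.
      ereal (opnorm (B ** matrix_inv (ctrans B ** D ** B) ** ctrans B ** D)))"

end

theory Submission
  imports Defs
begin

text \<open>
  For \<open>D\<close> with diagonal in the sector, \<open>P\<^sub>A = A (A\<^sup>* D A)\<^sup>-\<^sup>1 A\<^sup>* D\<close> is an
  oblique projection onto \<open>R(A)\<close>. Put \<open>E = D\<^sup>-\<^sup>*\<close>, whose diagonal lies in the same
  sector, and \<open>P\<^sub>Z = Z (Z\<^sup>* E Z)\<^sup>-\<^sup>1 Z\<^sup>* E\<close>. Since \<open>R(Z) = R(A)\<^sup>\<bottom>\<close>, the adjoint of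
  \<open>P\<^sub>A\<close> is \<open>I - P\<^sub>Z\<close>. An operator and its adjoint have the same norm, and
  \<open>\<parallel>I - P\<parallel> = \<parallel>P\<parallel>\<close> for every idempotent \<open>P \<noteq> 0, I\<close>; hence
  \<open>\<parallel>P\<^sub>A(D)\<parallel> = \<parallel>P\<^sub>Z(D\<^sup>-\<^sup>*)\<parallel>\<close>. As \<open>D \<mapsto> D\<^sup>-\<^sup>*\<close> is an involution of \<open>\<D>\<^sub>\<mu>\<close>, the
  two suprema coincide.
\<close>

lemma onorm_le_onorm_adjoint:
  fixes X :: "'a::real_inner \<Rightarrow> 'b::real_inner" and Y :: "'b \<Rightarrow> 'a"
  assumes X: "bounded_linear X" and Y: "bounded_linear Y"
    and adjoint: "\<And>x y. inner (X x) y = inner x (Y y)"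
  shows "onorm X \<le> onorm Y"
proof (rule onorm_bound[OF onorm_pos_le[OF Y]])
  fix x
  have "norm (X x) ^ 2 = inner x (Y (X x))"
    by (simp add: power2_norm_eq_inner adjoint)
  also have "\<dots> \<le> norm x * norm (Y (X x))"
    by (rule norm_cauchy_schwarz)
  also have "\<dots> \<le> norm x * (onorm Y * norm (X x))"
    by (simp add: mult_left_mono onorm[OF Y])
  finally have "norm (X x) * norm (X x) \<le> (onorm Y * norm x) * norm (X x)"
    by (simp add: power2_eq_square mult_ac)
  then show "norm (X x) \<le> onorm Y * norm x"
    using onorm_pos_le[OF Y] by (cases "X x = 0") auto
qed

lemma onorm_adjoint_eq:
  fixes X :: "'a::real_inner \<Rightarrow> 'b::real_inner" and Y :: "'b \<Rightarrow> 'a"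
  assumes X: "bounded_linear X" and Y: "bounded_linear Y"
    and adjoint: "\<And>x y. inner (X x) y = inner x (Y y)"
  shows "onorm X = onorm Y"
proof (rule antisym)
  show "onorm X \<le> onorm Y"
    by (rule onorm_le_onorm_adjoint[OF X Y adjoint])
  show "onorm Y \<le> onorm X"
    by (rule onorm_le_onorm_adjoint[OF Y X]) (metis adjoint inner_commute)
qed

lemma onorm_complement_idempotent_le:
  fixes P :: "'a::real_inner \<Rightarrow> 'a"
  assumes P: "bounded_linear P" and idem: "\<And>x. P (P x) = P x" and "P w \<noteq> 0"
  shows "onorm (\<lambda>x. x - P x) \<le> onorm P"
proof (rule onorm_bound[OF onorm_pos_le[OF P]])
  interpret P: bounded_linear P by (rule P)
  have one_le: "1 \<le> onorm P"
    using onorm[OF P, of "P w"] idem \<open>P w \<noteq> 0\<close> by simp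
  fix x
  define u v where "u = P x" and "v = x - P x"
  have x: "x = u + v" and Pu: "P u = u" and Pv: "P v = 0"
    by (simp_all add: u_def v_def idem P.diff)
  consider "u = 0" | "v = 0" | "u \<noteq> 0" "v \<noteq> 0" by blast
  then show "norm (x - P x) \<le> onorm P * norm x"
  proof cases
    case 1
    then show ?thesis
      using mult_right_mono[OF one_le norm_ge_zero[of x]] by (simp add: u_def)
  next
    case 2
    then show ?thesis
      using onorm_pos_le[OF P] by (simp add: v_def[symmetric])
  next
    case 3
    define a b where "a = norm u" and "b = norm v"
    have ab: "a > 0" "b > 0"
      using 3 by (simp_all add: a_def b_def)
    \<comment> \<open>The rescaled vector \<open>y\<close> has the norm of \<open>x\<close>, while \<open>P y\<close> has the norm of \<open>v\<close>.\<close>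
    define y where "y = (b / a) *\<^sub>R u + (a / b) *\<^sub>R v"
    have "inner y y = (b / a)\<^sup>2 * inner u u + (a / b)\<^sup>2 * inner v v + 2 * inner u v"
      using ab by (simp add: y_def inner_add_left inner_add_right inner_commute power2_eq_square
          algebra_simps)
    also have "\<dots> = b\<^sup>2 + a\<^sup>2 + 2 * inner u v"
      using ab by (simp add: dot_square_norm a_def[symmetric] b_def[symmetric] field_simps)
    also have "\<dots> = inner x x"
      by (simp add: x a_def b_def power2_norm_eq_inner inner_add_left inner_add_right inner_commute)
    finally have "norm y = norm x"
      by (simp add: norm_eq_sqrt_inner)
    moreover have "norm (P y) = b"
      using ab by (simp add: y_def P.add P.scaleR Pu Pv a_def)
    ultimately show ?thesis
      using onorm[OF P, of y] by (simp add: b_def v_def)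
  qed
qed

lemma onorm_complement_idempotent_eq:
  fixes P :: "'a::real_inner \<Rightarrow> 'a"
  assumes P: "bounded_linear P" and idem: "\<And>x. P (P x) = P x"
    and "P w \<noteq> 0" and "w' - P w' \<noteq> 0"
  shows "onorm (\<lambda>x. x - P x) = onorm P"
proof (rule antisym)
  interpret P: bounded_linear P by (rule P)
  show "onorm (\<lambda>x. x - P x) \<le> onorm P"
    by (rule onorm_complement_idempotent_le[OF P idem \<open>P w \<noteq> 0\<close>])
  have "onorm (\<lambda>x. x - (x - P x)) \<le> onorm (\<lambda>x. x - P x)"
    by (rule onorm_complement_idempotent_le[of _ w'])
      (use P \<open>w' - P w' \<noteq> 0\<close> in
        \<open>auto intro: bounded_linear_sub bounded_linear_ident simp: P.diff idem\<close>)
  then show "onorm P \<le> onorm (\<lambda>x. x - P x)"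
    by simp
qed

lemma full_rank_imp_inj:
  fixes A :: "'a::field^'n^'m"
  assumes "rank A = CARD('n)"
  shows "inj ((*v) A)"
proof -
  have "vec.span (rows A) = UNIV"
    using assms unfolding row_rank_def_gen
    by (simp add: vec.dim_eq_full[symmetric] card_cart_basis vec.dimension_def)
  then show ?thesis
    by (metis matrix_left_invertible_span_rows_gen matrix_left_invertible_injective)
qed

lemma matrix_inv_cancel_left:
  fixes G :: "'a::comm_semiring_1^'n^'n"
  assumes "invertible G"
  shows "matrix_inv G *v (G *v w) = w"
  using someI_ex[OF assms[unfolded invertible_def]]
  by (simp add: matrix_inv_def matrix_vector_mul_assoc)

lemma matrix_inv_cancel_right:
  fixes G :: "'a::comm_semiring_1^'n^'n"
  assumes "invertible G"
  shows "G *v (matrix_inv G *v w) = w"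
  using someI_ex[OF assms[unfolded invertible_def]]
  by (simp add: matrix_inv_def matrix_vector_mul_assoc)

lemma ctrans_ctrans [simp]: "ctrans (ctrans B) = B"
  by (simp add: ctrans_def vec_eq_iff)

lemma inner_eq_Re_cinner: "inner x y = Re (cinner x y)" for x y :: "complex^'m"
  by (simp add: inner_vec_def cinner_def Re_sum inner_complex_def)

lemma cinner_diff_right: "cinner x (y - z) = cinner x y - cinner x z"
  by (simp add: cinner_def right_diff_distrib sum_subtractf)

lemma cinner_scale_left: "cinner (c *s x) y = cnj c * cinner x y"
  by (simp add: cinner_def sum_distrib_left mult_ac)

lemma cinner_ctrans_left: "cinner (B *v x) y = cinner x (ctrans B *v y)"
  for B :: "complex^'k^'m"
proof -
  have "cinner (B *v x) y = (\<Sum>i\<in>UNIV. \<Sum>j\<in>UNIV. cnj (x $ j) * (cnj (B $ i $ j) * y $ i))"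
    by (simp add: cinner_def matrix_vector_mult_def cnj_sum sum_distrib_left sum_distrib_right
        mult_ac)
  also have "\<dots> = (\<Sum>j\<in>UNIV. \<Sum>i\<in>UNIV. cnj (x $ j) * (cnj (B $ i $ j) * y $ i))"
    by (rule sum.swap)
  also have "\<dots> = cinner x (ctrans B *v y)"
    by (simp add: cinner_def ctrans_def matrix_vector_mult_def sum_distrib_left)
  finally show ?thesis .
qed

lemma cinner_ctrans_right: "cinner x (B *v y) = cinner (ctrans B *v x) y"
  for B :: "complex^'k^'m"
  using cinner_ctrans_left[of "ctrans B"] by simp

lemma col_range_subspace: "subspace (col_range B)" for B :: "complex^'k^'m"
  unfolding col_range_def
  by (rule linear_subspace_image[OF bounded_linear.linear[OF matrix_vector_mul_bounded_linear]
        subspace_UNIV])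

lemma corth_col_range_eq_orthogonal_comp:
  fixes B :: "complex^'k^'m"
  shows "corth (col_range B) = orthogonal_comp (col_range B)"
proof (intro set_eqI iffI)
  fix x assume "x \<in> corth (col_range B)"
  then show "x \<in> orthogonal_comp (col_range B)"
    by (auto simp: corth_def orthogonal_comp_def orthogonal_def inner_eq_Re_cinner)
next
  fix x assume x: "x \<in> orthogonal_comp (col_range B)"
  have re: "Re (cinner (B *v s) x) = 0" for s
    using x by (auto simp: orthogonal_comp_def orthogonal_def inner_eq_Re_cinner col_range_def)
  \<comment> \<open>Complex orthogonality follows from real orthogonality to \<open>B s\<close> and to \<open>B (\<i> s)\<close>.\<close>
  have "cinner (B *v s) x = 0" for s
    using re[of s] re[of "\<i> *s s"]
    by (simp add: complex_eq_iff vector_scalar_commute cinner_scale_left)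
  then show "x \<in> corth (col_range B)"
    by (auto simp: corth_def col_range_def)
qed

lemma corth_col_range_swap:
  fixes A :: "complex^'n^'m" and Z :: "complex^'k^'m"
  assumes "col_range Z = corth (col_range A)"
  shows "corth (col_range Z) = col_range A"
  using orthogonal_comp_self[OF col_range_subspace[of A]] assms
  by (metis corth_col_range_eq_orthogonal_comp)

lemma ctrans_mult_eq_0_imp_corth:
  fixes B :: "complex^'k^'m"
  assumes "ctrans B *v y = 0"
  shows "y \<in> corth (col_range B)"
  using assms by (auto simp: corth_def col_range_def cinner_ctrans_left) (simp add: cinner_def)

lemma diag_mat_mult_vector: "diag_mat d *v z = (\<chi> i. d $ i * z $ i)"
  by (simp add: diag_mat_def matrix_vector_mult_def vec_eq_iff if_distrib if_distribR cong: if_cong)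

lemma ctrans_diag_mat: "ctrans (diag_mat d) = diag_mat (\<chi> i. cnj (d $ i))"
  by (simp add: ctrans_def diag_mat_def vec_eq_iff)

lemma Re_cinner_diag_mat_pos:
  assumes "\<And>i. Re (d $ i) > 0" and "z \<noteq> 0"
  shows "Re (cinner z (diag_mat d *v z)) > 0"
proof -
  obtain j where "z $ j \<noteq> 0"
    using \<open>z \<noteq> 0\<close> by (auto simp: vec_eq_iff)
  have "cinner z (diag_mat d *v z) = (\<Sum>i\<in>UNIV. d $ i * of_real ((cmod (z $ i))\<^sup>2))"
    by (simp add: cinner_def diag_mat_mult_vector complex_mult_cnj cmod_power2 mult_ac)
  then have "Re (cinner z (diag_mat d *v z)) = (\<Sum>i\<in>UNIV. Re (d $ i) * (cmod (z $ i))\<^sup>2)"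
    by (simp add: Re_sum)
  also have "\<dots> > 0"
    using \<open>z $ j \<noteq> 0\<close> by (intro sum_pos2[of _ j]) (simp_all add: assms(1) less_imp_le)
  finally show ?thesis .
qed

lemma invertible_gram_diag_mat:
  fixes B :: "complex^'k^'m"
  assumes inj: "inj ((*v) B)" and d: "\<And>i. Re (d $ i) > 0"
  shows "invertible (ctrans B ** diag_mat d ** B)"
proof -
  have "w = 0" if "(ctrans B ** diag_mat d ** B) *v w = 0" for w
  proof (rule ccontr)
    assume "w \<noteq> 0"
    then have "B *v w \<noteq> 0"
      using inj by (metis injD matrix_vector_mult_0_right)
    then have "Re (cinner (B *v w) (diag_mat d *v (B *v w))) > 0"
      by (rule Re_cinner_diag_mat_pos[OF d])
    moreover have "cinner (B *v w) (diag_mat d *v (B *v w))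
        = cinner w ((ctrans B ** diag_mat d ** B) *v w)"
      by (simp add: cinner_ctrans_left matrix_vector_mul_assoc matrix_mul_assoc)
    moreover have "\<dots> = 0"
      using that by (simp add: cinner_def)
    ultimately show False
      by simp
  qed
  then show ?thesis
    by (metis invertible_left_inverse matrix_left_invertible_ker)
qed

definition oblique_proj :: "complex^'k^'m \<Rightarrow> complex^'m \<Rightarrow> complex^'m^'m" where
  "oblique_proj B d = B ** matrix_inv (ctrans B ** diag_mat d ** B) ** ctrans B ** diag_mat d"

lemma oblique_proj_apply:
  "oblique_proj B d *v x
    = B *v (matrix_inv (ctrans B ** diag_mat d ** B) *v (ctrans B *v (diag_mat d *v x)))"
  by (simp add: oblique_proj_def matrix_vector_mul_assoc matrix_mul_assoc)

context
  fixes B :: "complex^'k^'m" and d :: "complex^'m"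
  assumes inj: "inj ((*v) B)" and Re_pos: "\<And>i. Re (d $ i) > 0"
begin

private lemma gram_invertible: "invertible (ctrans B ** diag_mat d ** B)"
  by (rule invertible_gram_diag_mat[OF inj Re_pos])

private lemma gram_apply:
  "ctrans B *v (diag_mat d *v (B *v s)) = (ctrans B ** diag_mat d ** B) *v s"
  by (simp add: matrix_vector_mul_assoc matrix_mul_assoc)

lemma oblique_proj_fixes_col_range: "oblique_proj B d *v (B *v s) = B *v s"
  by (simp add: oblique_proj_apply gram_apply matrix_inv_cancel_left[OF gram_invertible])

lemma oblique_proj_idem: "oblique_proj B d *v (oblique_proj B d *v x) = oblique_proj B d *v x"
  by (metis oblique_proj_apply oblique_proj_fixes_col_range)

lemma ctrans_diag_mat_oblique_proj:
  "ctrans B *v (diag_mat d *v (oblique_proj B d *v x)) = ctrans B *v (diag_mat d *v x)"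
  by (simp add: oblique_proj_apply gram_apply matrix_inv_cancel_right[OF gram_invertible])

lemma oblique_proj_nonzero: "\<exists>x. oblique_proj B d *v x \<noteq> 0"
proof
  have "axis undefined 1 \<noteq> (0 :: complex^'k)"
    by (simp add: axis_eq_0_iff)
  then have "B *v axis undefined 1 \<noteq> 0"
    using inj by (metis injD matrix_vector_mult_0_right)
  then show "oblique_proj B d *v (B *v axis undefined 1) \<noteq> 0"
    by (simp add: oblique_proj_fixes_col_range)
qed

end

definition cnj_inverse_vec :: "complex^'m \<Rightarrow> complex^'m" where
  "cnj_inverse_vec d = (\<chi> i. inverse (cnj (d $ i)))"

lemma cnj_inverse_vec_cnj_inverse_vec [simp]: "cnj_inverse_vec (cnj_inverse_vec d) = d"
  by (simp add: cnj_inverse_vec_def vec_eq_iff)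

lemma Re_cnj_inverse_vec_pos: "Re (d $ i) > 0 \<Longrightarrow> Re (cnj_inverse_vec d $ i) > 0"
  by (simp add: cnj_inverse_vec_def Re_divide add_pos_nonneg)

lemma ctrans_diag_mat_cnj_inverse_vec:
  assumes "\<And>i. d $ i \<noteq> 0"
  shows "ctrans (diag_mat d) *v (diag_mat (cnj_inverse_vec d) *v r) = r"
  using assms by (simp add: ctrans_diag_mat diag_mat_mult_vector cnj_inverse_vec_def vec_eq_iff)

lemma cinner_oblique_proj_complement:
  fixes A :: "complex^'n^'m" and Z :: "complex^'k^'m"
  assumes injA: "inj ((*v) A)" and injZ: "inj ((*v) Z)"
    and orth: "col_range Z = corth (col_range A)"
    and Re_pos: "\<And>i. Re (d $ i) > 0"
  shows "cinner (oblique_proj A d *v x) y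
    = cinner x (y - oblique_proj Z (cnj_inverse_vec d) *v y)"
proof -
  let ?D = "diag_mat d" and ?E = "diag_mat (cnj_inverse_vec d)"
  let ?P = "oblique_proj A d" and ?M = "oblique_proj Z (cnj_inverse_vec d)"
  have d_nonzero: "d $ i \<noteq> 0" for i
    using Re_pos[of i] by auto
  define r where "r = y - ?M *v y"
  have "ctrans Z *v (?E *v r) = 0"
    using ctrans_diag_mat_oblique_proj[OF injZ Re_cnj_inverse_vec_pos[OF Re_pos]]
    by (simp add: r_def matrix_vector_right_distrib matrix_vector_mult_diff_distrib)
  then have "?E *v r \<in> col_range A"
    using ctrans_mult_eq_0_imp_corth corth_col_range_swap[OF orth] by blast
  then obtain v where "?E *v r = A *v v"
    by (auto simp: col_range_def)
  then have r: "r = ctrans ?D *v (A *v v)"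
    using ctrans_diag_mat_cnj_inverse_vec[OF d_nonzero, of r] by simp
  obtain w where Px: "?P *v x = A *v w"
    by (metis oblique_proj_apply)
  have "?M *v y \<in> corth (col_range A)"
    using orth by (metis oblique_proj_apply col_range_def rangeI)
  then have "cinner (?P *v x) (?M *v y) = 0"
    by (auto simp: Px corth_def col_range_def)
  then have "cinner (?P *v x) y = cinner (?P *v x) r"
    by (simp add: r_def cinner_diff_right)
  also have "\<dots> = cinner (ctrans A *v (?D *v (?P *v x))) v"
    by (simp add: r cinner_ctrans_right)
  also have "\<dots> = cinner (ctrans A *v (?D *v x)) v"
    by (simp add: ctrans_diag_mat_oblique_proj[OF injA Re_pos])
  also have "\<dots> = cinner x r"
    by (simp add: r cinner_ctrans_right)
  finally show ?thesis
    by (simp add: r_def)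
qed

lemma opnorm_oblique_proj_complement:
  fixes A :: "complex^'n^'m" and Z :: "complex^'k^'m"
  assumes injA: "inj ((*v) A)" and injZ: "inj ((*v) Z)"
    and orth: "col_range Z = corth (col_range A)"
    and Re_pos: "\<And>i. Re (d $ i) > 0"
  shows "opnorm (oblique_proj A d) = opnorm (oblique_proj Z (cnj_inverse_vec d))"
proof -
  let ?P = "oblique_proj A d" and ?M = "oblique_proj Z (cnj_inverse_vec d)"
  note adjoint = cinner_oblique_proj_complement[OF injA injZ orth Re_pos]
  have "onorm ((*v) ?P) = onorm (\<lambda>y. y - ?M *v y)"
    by (rule onorm_adjoint_eq)
      (auto intro: bounded_linear_sub bounded_linear_ident
        simp: inner_eq_Re_cinner adjoint)
  also have "\<dots> = onorm ((*v) ?M)"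
  proof -
    obtain x where "?P *v x \<noteq> 0"
      using oblique_proj_nonzero[OF injA Re_pos] by blast
    have "\<exists>w'. w' - ?M *v w' \<noteq> 0"
    proof (rule ccontr)
      assume "\<nexists>w'. w' - ?M *v w' \<noteq> 0"
      then have "cinner (?P *v x) (?P *v x) = cinner x 0"
        by (simp only: adjoint) simp
      then have "inner (?P *v x) (?P *v x) = 0"
        by (simp add: inner_eq_Re_cinner cinner_def)
      with \<open>?P *v x \<noteq> 0\<close> show False
        by simp
    qed
    then obtain w' where "w' - ?M *v w' \<noteq> 0" ..
    moreover obtain w where "?M *v w \<noteq> 0"
      using oblique_proj_nonzero[OF injZ Re_cnj_inverse_vec_pos[OF Re_pos]] by blast
    ultimately show ?thesis
      by (intro onorm_complement_idempotent_eq)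
        (simp_all add: oblique_proj_idem[OF injZ Re_cnj_inverse_vec_pos[OF Re_pos]])
  qed
  finally show ?thesis
    by (simp add: opnorm_def)
qed

lemma sector_Re_pos:
  assumes "0 < \<mu>" and "z \<in> sector \<mu>"
  shows "Re z > 0"
proof -
  have z: "\<bar>Im z\<bar> \<le> \<mu> * Re z" "z \<noteq> 0"
    using assms(2) by (auto simp: sector_def)
  then have "0 \<le> \<mu> * Re z"
    by (meson abs_ge_zero order_trans)
  then have "Re z \<ge> 0"
    using assms(1) by (simp add: zero_le_mult_iff)
  moreover have "Re z \<noteq> 0"
    using z by (auto simp: complex_eq_iff)
  ultimately show ?thesis
    by simp
qed

lemma sector_inverse_cnj:
  assumes "z \<in> sector \<mu>"
  shows "inverse (cnj z) \<in> sector \<mu>"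
proof -
  have z: "\<bar>Im z\<bar> \<le> \<mu> * Re z" "z \<noteq> 0"
    using assms by (auto simp: sector_def)
  define s where "s = (Re z)\<^sup>2 + (Im z)\<^sup>2"
  have "s > 0"
    using z(2) by (simp add: s_def complex_neq_0[symmetric])
  have re: "Re (inverse (cnj z)) = Re z / s" and im: "Im (inverse (cnj z)) = Im z / s"
    by (simp_all add: s_def)
  have "\<bar>Im z / s\<bar> \<le> \<mu> * (Re z / s)"
    using divide_right_mono[OF z(1), of s] \<open>s > 0\<close> by (simp add: abs_div_pos[symmetric])
  then show ?thesis
    using z(2) unfolding sector_def mem_Collect_eq re im by simp
qed

lemma chi_eq_SUP_oblique_proj:
  fixes B :: "complex^'k^'m"
  shows "chi B \<mu> = (SUP d\<in>{d. \<forall>i. d $ i \<in> sector \<mu>}. ereal (opnorm (oblique_proj B d)))"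
proof -
  have "Dset \<mu> = diag_mat ` {d :: complex^'m. \<forall>i. d $ i \<in> sector \<mu>}"
    by (auto simp: Dset_def)
  then show ?thesis
    by (simp add: chi_def oblique_proj_def image_image)
qed

lemma cnj_inverse_vec_image_sectors:
  "cnj_inverse_vec ` {d. \<forall>i. d $ i \<in> sector \<mu>} = {d. \<forall>i. d $ i \<in> sector \<mu>}"
    (is "cnj_inverse_vec ` ?S = ?S")
proof -
  have closed: "cnj_inverse_vec d \<in> ?S" if "d \<in> ?S" for d
    using that by (auto simp: cnj_inverse_vec_def intro: sector_inverse_cnj)
  show ?thesis
  proof
    show "cnj_inverse_vec ` ?S \<subseteq> ?S"
      using closed by blast
    show "?S \<subseteq> cnj_inverse_vec ` ?S"
    proof
      fix d assume "d \<in> ?S"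
      show "d \<in> cnj_inverse_vec ` ?S"
        using closed[OF \<open>d \<in> ?S\<close>] by (rule image_eqI[rotated]) simp
    qed
  qed
qed

theorem proposition3p9:
  fixes A :: "complex^'n^'m" and Z :: "complex^'k^'m"
  assumes "CARD('n) \<le> CARD('m)"
    and "rank A = CARD('n)"
    and "CARD('k) = CARD('m) - CARD('n)"
    and "inj (\<lambda>x. Z *v x)"
    and "col_range Z = corth (col_range A)"
  shows "\<forall>\<mu>>0. chi A \<mu> = chi Z \<mu>"
proof (intro allI impI)
  fix \<mu> :: real assume "\<mu> > 0"
  let ?S = "{d. \<forall>i. d $ i \<in> sector \<mu>}"
  have injA: "inj ((*v) A)"
    by (rule full_rank_imp_inj[OF assms(2)])
  have "opnorm (oblique_proj A d) = opnorm (oblique_proj Z (cnj_inverse_vec d))" if "d \<in> ?S" for d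
    using that \<open>\<mu> > 0\<close> assms(4,5)
    by (intro opnorm_oblique_proj_complement[OF injA]) (auto intro: sector_Re_pos)
  then have "chi A \<mu> = (SUP d\<in>?S. ereal (opnorm (oblique_proj Z (cnj_inverse_vec d))))"
    by (simp add: chi_eq_SUP_oblique_proj)
  also have "\<dots> = (SUP d\<in>cnj_inverse_vec ` ?S. ereal (opnorm (oblique_proj Z d)))"
    by (simp add: image_image)
  also have "\<dots> = chi Z \<mu>"
    by (simp only: cnj_inverse_vec_image_sectors chi_eq_SUP_oblique_proj)
  finally show "chi A \<mu> = chi Z \<mu>" .
qed

end
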